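(* Let $(X,\rho)$ be a complete, unbounded hyperbolic metric space and let $\omega:[0,+\infty)\to[0,+\infty)$ be a continuous, subadditive, nonzero and nondecreasing function with $\omega(0)=0$. Let $\mathcal{C}^{\mathrm{b}}_\omega(X)=\{f\in\mathcal{C}_\omega(X): \sup_{x,y\in X}\rho(f(x),f(y))<+\infty\}$ be endowed with the metric $d_\infty(f,g)=\sup_{x\in X}\rho(f(x),g(x))$. Then there is a $\sigma$-lower porous set $\mathcal{M}\subset\mathcal{C}^{\mathrm{b}}_\omega(X)$ such that for every $f\in\mathcal{C}^{\mathrm{b}}_\omega(X)\setminus\mathcal{M}$ one has $\omega_f(s)<\omega(s)$ for every $s\in(0,+\infty)$.
   Context: A metric space $(X,\rho)$ has a coherent system of geodesics $\Gamma$ if $\Gamma$ is a family of isometries $\gamma:[0,\rho(x,y)]\to X$ with $\gamma(0)=x$, $\gamma(\rho(x,y))=y$ such that: (1) for all $x,y$ there is a unique $\gamma\in\Gamma$ from $x$ to $y$; (2) if $\gamma\in\Gamma$ goes from $x$ to $y$, then $t\mapsto\gamma(\rho(x,y)-t)$ is the element of $\Gamma$ from $y$ to $x$; (3) if $\gamma\in\Gamma$ goes from $x$ to $y$ and $0\le t_1\le t_2\le\rho(x,y)$, then $t\mapsto\gamma(t+t_1)$ on $[0,t_2-t_1]$ is the element of $\Gamma$ from $\gamma(t_1)$ to $\gamma(t_2)$. Write $(1-t)x\oplus ty=\gamma(t\rho(x,y))$ with $\gamma\in\Gamma$ from $x$ to $y$. $X$ is hyperbolic if $\rho((1-t)x\oplus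 ty,(1-t)x\oplus tz)\le t\rho(y,z)$ for all $x,y,z\in X$, $t\in[0,1]$. The modulus of continuity of $f:X\to X$ is $\omega_f(s)=\sup\{\rho(f(x),f(y)):\rho(x,y)\le s\}$, and $\mathcal{C}_\omega(X)$ is the set of maps $f:X\to X$ with $\omega_f\le\omega$. In a metric space $(Y,d)$, a set $P$ is lower porous at $x\in Y$ if there are $\epsilon_0>0$, $\alpha>0$ such that for every $\epsilon\in(0,\epsilon_0]$ there is $y\in Y$ with $B(y,\alpha\epsilon)\subseteq B(x,\epsilon)\setminus P$ (open balls); $P$ is lower porous if it is lower porous at every $x\in Y$, and $\sigma$-lower porous if it is a countable union of lower porous sets. *)

theory Defs
  imports "HOL-Analysis.Analysis"
begin

text \<open>A coherent system of geodesics, represented by its (unique) selector: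
  G x y is the element of the system going from x to y, defined on [0, dist x y].\<close>
definition coherent_geodesics :: "('a::metric_space \<Rightarrow> 'a \<Rightarrow> real \<Rightarrow> 'a) \<Rightarrow> bool" where
  "coherent_geodesics G \<longleftrightarrow>
     (\<forall>x y. G x y 0 = x \<and> G x y (dist x y) = y \<and>
        (\<forall>s\<in>{0..dist x y}. \<forall>t\<in>{0..dist x y}. dist (G x y s) (G x y t) = \<bar>s - t\<bar>)) \<and>
     (\<forall>x y. \<forall>t\<in>{0..dist x y}. G y x t = G x y (dist x y - t)) \<and>
     (\<forall>x y t1 t2. 0 \<le> t1 \<longrightarrow> t1 \<le> t2 \<longrightarrow> t2 \<le> dist x y \<longrightarrow>
        (\<forall>t\<in>{0..t2 - t1}. G (G x y t1) (G x y t2) t = G x y (t + t1)))"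

text \<open>(1-t)x \<oplus> ty\<close>
definition geo_comb :: "('a::metric_space \<Rightarrow> 'a \<Rightarrow> real \<Rightarrow> 'a) \<Rightarrow> real \<Rightarrow> 'a \<Rightarrow> 'a \<Rightarrow> 'a" where
  "geo_comb G t x y = G x y (t * dist x y)"

definition hyperbolic_space :: "'a::metric_space itself \<Rightarrow> bool" where
  "hyperbolic_space _ \<longleftrightarrow> (\<exists>G :: 'a \<Rightarrow> 'a \<Rightarrow> real \<Rightarrow> 'a. coherent_geodesics G \<and>
     (\<forall>x y z. \<forall>t\<in>{0..1}. dist (geo_comb G t x y) (geo_comb G t x z) \<le> t * dist y z))"

text \<open>Modulus of continuity (extended-real valued, since the supremum may be infinite).\<close>
definition modulus :: "('a::metric_space \<Rightarrow> 'a) \<Rightarrow> real \<Rightarrow> ereal" where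
  "modulus f s = (SUP p\<in>{(x, y). dist x y \<le> s}. ereal (dist (f (fst p)) (f (snd p))))"

definition C_omega :: "(real \<Rightarrow> real) \<Rightarrow> ('a::metric_space \<Rightarrow> 'a) set" where
  "C_omega \<omega> = {f. \<forall>s\<ge>0. modulus f s \<le> ereal (\<omega> s)}"

definition C_omega_b :: "(real \<Rightarrow> real) \<Rightarrow> ('a::metric_space \<Rightarrow> 'a) set" where
  "C_omega_b \<omega> = {f \<in> C_omega \<omega>. \<exists>B. \<forall>x y. dist (f x) (f y) \<le> B}"

definition d_sup :: "('a::metric_space \<Rightarrow> 'a) \<Rightarrow> ('a \<Rightarrow> 'a) \<Rightarrow> real" where
  "d_sup f g = (SUP x. dist (f x) (g x))"

definition lower_porous_at :: "'b set \<Rightarrow> ('b \<Rightarrow> 'b \<Rightarrow> real) \<Rightarrow> 'b set \<Rightarrow> 'b \<Rightarrow> bool" where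
  "lower_porous_at Y d P x \<longleftrightarrow> (\<exists>\<epsilon>0>0. \<exists>\<alpha>>0. \<forall>\<epsilon>. 0 < \<epsilon> \<and> \<epsilon> \<le> \<epsilon>0 \<longrightarrow>
     (\<exists>y\<in>Y. {z\<in>Y. d y z < \<alpha> * \<epsilon>} \<subseteq> {z\<in>Y. d x z < \<epsilon>} - P))"

definition lower_porous :: "'b set \<Rightarrow> ('b \<Rightarrow> 'b \<Rightarrow> real) \<Rightarrow> 'b set \<Rightarrow> bool" where
  "lower_porous Y d P \<longleftrightarrow> (\<forall>x\<in>Y. lower_porous_at Y d P x)"

definition sigma_lower_porous :: "'b set \<Rightarrow> ('b \<Rightarrow> 'b \<Rightarrow> real) \<Rightarrow> 'b set \<Rightarrow> bool" where
  "sigma_lower_porous Y d P \<longleftrightarrow> (\<exists>A :: nat \<Rightarrow> 'b set. P = (\<Union>n. A n) \<and> (\<forall>n. lower_porous Y d (A n)))"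

end

theory Submission
  imports Defs
begin

text \<open>Given f with bounded range, pull it towards a point c = f x0 of its range along the
  geodesics: g x = t c \<oplus> (1 - t) f x. Hyperbolicity gives \<rho>(g x, g y) \<le> (1 - t) \<rho>(f x, f y),
  while d_inf(f, g) \<le> t diam f(X). Hence every k with d_inf(g, k) < \<delta> satisfies
  \<omega>_k(s) \<le> (1 - t) \<omega>(s) + 2\<delta> < \<omega>(s) for all s \<ge> r once 2\<delta> < t \<omega>(r), and \<omega>(r) > 0 by
  subadditivity. So a ball of radius proportional to t \<sim> d_inf(f, g) around g misses the maps
  whose modulus reaches \<omega> somewhere on [r, \<infinity>); these sets are lower porous, and M is their
  union over r = 1/(n+1).\<close>

lemma modulus_leI:
  assumes "\<And>x y. dist x y \<le> s \<Longrightarrow> dist (f x) (f y) \<le> K"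
  shows "modulus f s \<le> ereal K"
  unfolding modulus_def using assms by (auto intro!: SUP_least)

lemma dist_le_modulus:
  assumes "dist x y \<le> s"
  shows "ereal (dist (f x) (f y)) \<le> modulus f s"
  unfolding modulus_def using assms by (auto intro!: SUP_upper2[of "(x, y)"])

lemma C_omega_dist_le:
  assumes "f \<in> C_omega \<omega>" "dist x y \<le> s"
  shows "dist (f x) (f y) \<le> \<omega> s"
proof -
  have "s \<ge> 0" using assms(2) zero_le_dist[of x y] by linarith
  then have "modulus f s \<le> ereal (\<omega> s)" using assms(1) by (auto simp: C_omega_def)
  with dist_le_modulus[OF assms(2), of f] show ?thesis by (metis ereal_less_eq(3) order_trans)
qed

lemma C_omega_b_nonexpansive_image:
  assumes "f \<in> C_omega_b \<omega>" "\<And>x y. dist (g x) (g y) \<le> dist (f x) (f y)"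
  shows "g \<in> C_omega_b \<omega>"
proof -
  obtain B where "\<forall>x y. dist (f x) (f y) \<le> B" using assms(1) by (auto simp: C_omega_b_def)
  then have "\<forall>x y. dist (g x) (g y) \<le> B" using assms(2) order_trans by blast
  moreover have "modulus g s \<le> ereal (\<omega> s)" if "s \<ge> 0" for s
    using assms C_omega_dist_le order_trans by (fastforce simp: C_omega_b_def intro!: modulus_leI)
  ultimately show ?thesis by (auto simp: C_omega_b_def C_omega_def)
qed

lemma d_sup_leI:
  assumes "\<And>x. dist (f x) (g x) \<le> K"
  shows "d_sup f g \<le> K"
  unfolding d_sup_def using assms by (auto intro!: cSUP_least)

lemma C_omega_b_bdd_above_dist:
  fixes f g :: "'a::metric_space \<Rightarrow> 'a"
  assumes "f \<in> C_omega_b \<omega>" "g \<in> C_omega_b \<omega>"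
  shows "bdd_above (range (\<lambda>x. dist (f x) (g x)))"
proof -
  obtain B1 where B1: "\<forall>x y. dist (f x) (f y) \<le> B1" using assms(1) by (auto simp: C_omega_b_def)
  obtain B2 where B2: "\<forall>x y. dist (g x) (g y) \<le> B2" using assms(2) by (auto simp: C_omega_b_def)
  have "dist (f x) (g x) \<le> B1 + dist (f x0) (g x0) + B2" for x x0
    using dist_triangle[of "f x" "g x" "f x0"] dist_triangle[of "f x0" "g x" "g x0"]
      B1[rule_format, of x x0] B2[rule_format, of x0 x] by linarith
  then show ?thesis by (auto intro!: bdd_aboveI)
qed

lemma dist_le_d_sup:
  assumes "f \<in> C_omega_b \<omega>" "g \<in> C_omega_b \<omega>"
  shows "dist (f x) (g x) \<le> d_sup f g"
  unfolding d_sup_def using C_omega_b_bdd_above_dist[OF assms] by (auto intro!: cSUP_upper)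

lemma d_sup_triangle:
  assumes "f \<in> C_omega_b \<omega>" "g \<in> C_omega_b \<omega>" "k \<in> C_omega_b \<omega>"
  shows "d_sup f k \<le> d_sup f g + d_sup g k"
  using dist_triangle[of "f x" "k x" "g x" for x] dist_le_d_sup[OF assms(1,2)]
    dist_le_d_sup[OF assms(2,3)] by (intro d_sup_leI) (smt (verit))

lemma subadditive_pos:
  fixes \<omega> :: "real \<Rightarrow> real"
  assumes nonneg: "\<forall>s\<ge>0. \<omega> s \<ge> 0"
    and subadd: "\<forall>s\<ge>0. \<forall>t\<ge>0. \<omega> (s + t) \<le> \<omega> s + \<omega> t"
    and mono: "mono_on {0..} \<omega>"
    and nonzero: "s \<ge> 0" "\<omega> s \<noteq> 0"
    and "a > 0"
  shows "\<omega> a > 0"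
proof (rule ccontr)
  assume "\<not> \<omega> a > 0"
  then have a0: "\<omega> a = 0" using nonneg[rule_format, of a] \<open>a > 0\<close> by linarith
  have multiples: "\<omega> (real (Suc k) * a) \<le> 0" for k
  proof (induction k)
    case (Suc k)
    have "\<omega> (real (Suc k) * a + a) \<le> \<omega> (real (Suc k) * a) + \<omega> a"
      using subadd \<open>a > 0\<close> by simp
    then show ?case using Suc a0 by (simp add: algebra_simps)
  qed (use a0 in simp)
  obtain k :: nat where "s / a \<le> real k" using real_arch_simple by blast
  then have "s \<le> real (Suc k) * a" using \<open>a > 0\<close> by (simp add: field_simps)
  then have "\<omega> s \<le> \<omega> (real (Suc k) * a)" using mono_onD[OF mono] nonzero \<open>a > 0\<close> by simp
  then show False using multiples[of k] nonneg nonzero by force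
qed

lemma geo_comb_dist_right:
  assumes "coherent_geodesics G" "\<tau> \<in> {0..1}"
  shows "dist (geo_comb G \<tau> x y) y = (1 - \<tau>) * dist x y"
proof -
  have iso: "\<forall>s\<in>{0..dist x y}. \<forall>u\<in>{0..dist x y}. dist (G x y s) (G x y u) = \<bar>s - u\<bar>"
    and endpoint: "G x y (dist x y) = y"
    using assms(1) unfolding coherent_geodesics_def by blast+
  have between: "\<tau> * dist x y \<in> {0..dist x y}" using assms(2) by (auto simp: mult_left_le_one_le)
  then have "dist (G x y (\<tau> * dist x y)) y = \<bar>\<tau> * dist x y - dist x y\<bar>"
    using iso[rule_format, of "\<tau> * dist x y" "dist x y"] endpoint by simp
  also have "\<dots> = (1 - \<tau>) * dist x y" using between by (simp add: abs_of_nonpos algebra_simps)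
  finally show ?thesis unfolding geo_comb_def .
qed

lemma modulus_near_contraction_le:
  fixes f g k :: "'a::metric_space \<Rightarrow> 'a"
  assumes "f \<in> C_omega \<omega>" "\<tau> \<ge> 0"
    and "\<And>x y. dist (g x) (g y) \<le> \<tau> * dist (f x) (f y)"
    and "\<And>x. dist (g x) (k x) \<le> \<delta>"
  shows "modulus k s \<le> ereal (\<tau> * \<omega> s + 2 * \<delta>)"
proof (rule modulus_leI)
  fix x y :: 'a assume "dist x y \<le> s"
  then have "\<tau> * dist (f x) (f y) \<le> \<tau> * \<omega> s"
    using C_omega_dist_le[OF assms(1)] assms(2) by (simp add: mult_left_mono)
  moreover have "dist (k x) (k y) \<le> dist (g x) (k x) + dist (g x) (g y) + dist (g y) (k y)"
    using dist_triangle[of "k x" "k y" "g x"] dist_triangle[of "g x" "k y" "g y"]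
    by (simp add: dist_commute)
  ultimately show "dist (k x) (k y) \<le> \<tau> * \<omega> s + 2 * \<delta>"
    using assms(3)[of x y] assms(4)[of x] assms(4)[of y] by linarith
qed

definition saturating_maps :: "(real \<Rightarrow> real) \<Rightarrow> real \<Rightarrow> ('a::metric_space \<Rightarrow> 'a) set" where
  "saturating_maps \<omega> r = {f \<in> C_omega_b \<omega>. \<exists>s\<ge>r. \<not> modulus f s < ereal (\<omega> s)}"

lemma lower_porous_saturating_maps:
  fixes G :: "'a::metric_space \<Rightarrow> 'a \<Rightarrow> real \<Rightarrow> 'a"
  assumes G: "coherent_geodesics G"
    and hyp: "\<forall>x y z. \<forall>t\<in>{0..1}. dist (geo_comb G t x y) (geo_comb G t x z) \<le> t * dist y z"
    and m: "m > 0" "\<And>s. s \<ge> r \<Longrightarrow> m \<le> \<omega> s"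
  shows "lower_porous (C_omega_b \<omega> :: ('a \<Rightarrow> 'a) set) d_sup (saturating_maps \<omega> r)"
  unfolding lower_porous_def lower_porous_at_def
proof
  fix f :: "'a \<Rightarrow> 'a" assume fY: "f \<in> C_omega_b \<omega>"
  obtain B where B: "\<forall>x y. dist (f x) (f y) \<le> B" using fY by (auto simp: C_omega_b_def)
  define R where "R = \<bar>B\<bar> + m"
  define \<alpha> where "\<alpha> = m / (4 * R)"
  have R: "R > 0" "m \<le> R" "B \<le> R" and \<alpha>: "\<alpha> > 0" "\<alpha> \<le> 1/4"
    using m by (auto simp: R_def \<alpha>_def field_simps)
  have "\<exists>g\<in>C_omega_b \<omega>. {k \<in> C_omega_b \<omega>. d_sup g k < \<alpha> * \<epsilon>}
          \<subseteq> {k \<in> C_omega_b \<omega>. d_sup f k < \<epsilon>} - saturating_maps \<omega> r"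
    if \<epsilon>: "0 < \<epsilon>" "\<epsilon> \<le> R" for \<epsilon>
  proof -
    define t where "t = \<epsilon> / (2 * R)"
    have t: "0 < t" "t \<le> 1" "t * m = 2 * (\<alpha> * \<epsilon>)" "t * B \<le> \<epsilon> / 2"
      using \<epsilon> R m by (auto simp: t_def \<alpha>_def field_simps)
    define g where "g = (\<lambda>x. geo_comb G (1 - t) (f undefined) (f x))"
    have contract: "dist (g x) (g y) \<le> (1 - t) * dist (f x) (f y)" for x y
      using hyp t unfolding g_def by simp
    then have gY: "g \<in> C_omega_b \<omega>"
      using t by (intro C_omega_b_nonexpansive_image[OF fY]) (smt (verit) mult_left_le_one_le zero_le_dist)
    have "dist (f x) (g x) \<le> t * B" for x
      using geo_comb_dist_right[OF G, of "1 - t"] t B mult_left_mono[of _ B t]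
      by (simp add: g_def dist_commute)
    then have fg: "d_sup f g \<le> \<epsilon> / 2" using t by (intro d_sup_leI) (meson order_trans)
    show ?thesis
    proof (intro bexI[OF _ gY] subsetI)
      fix k assume "k \<in> {k \<in> C_omega_b \<omega>. d_sup g k < \<alpha> * \<epsilon>}"
      then have kY: "k \<in> C_omega_b \<omega>" and gk: "d_sup g k < \<alpha> * \<epsilon>" by auto
      have "\<alpha> * \<epsilon> \<le> \<epsilon> / 4" using mult_right_mono[OF \<alpha>(2), of \<epsilon>] \<epsilon> by simp
      then have "d_sup f k < \<epsilon>" using d_sup_triangle[OF fY gY kY] fg gk \<epsilon>(1) by linarith
      moreover have "modulus k s < ereal (\<omega> s)" if "s \<ge> r" for s
      proof -
        have "t * m \<le> t * \<omega> s" using m(2) that t(1) by simp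
        then have gap: "(1 - t) * \<omega> s + 2 * d_sup g k < \<omega> s"
          unfolding left_diff_distrib using t(3) gk by linarith
        have "modulus k s \<le> ereal ((1 - t) * \<omega> s + 2 * d_sup g k)"
          using fY t contract dist_le_d_sup[OF gY kY]
          by (intro modulus_near_contraction_le) (auto simp: C_omega_b_def)
        with gap show ?thesis using order_le_less_trans by fastforce
      qed
      ultimately show "k \<in> {k \<in> C_omega_b \<omega>. d_sup f k < \<epsilon>} - saturating_maps \<omega> r"
        using kY by (auto simp: saturating_maps_def)
    qed
  qed
  with R \<alpha> show "\<exists>\<epsilon>0>0. \<exists>\<alpha>>0. \<forall>\<epsilon>. 0 < \<epsilon> \<and> \<epsilon> \<le> \<epsilon>0 \<longrightarrow> (\<exists>g\<in>C_omega_b \<omega>.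
      {k \<in> C_omega_b \<omega>. d_sup g k < \<alpha> * \<epsilon>} \<subseteq> {k \<in> C_omega_b \<omega>. d_sup f k < \<epsilon>} - saturating_maps \<omega> r)"
    by blast
qed

theorem theorem4p1:
  fixes \<omega> :: "real \<Rightarrow> real"
  assumes "hyperbolic_space TYPE('a::complete_space)"
    and "\<not> bounded (UNIV :: 'a set)"
    and "continuous_on {0..} \<omega>"
    and "\<forall>s\<ge>0. \<omega> s \<ge> 0"
    and "\<forall>s\<ge>0. \<forall>t\<ge>0. \<omega> (s + t) \<le> \<omega> s + \<omega> t"
    and "\<exists>s\<ge>0. \<omega> s \<noteq> 0"
    and "mono_on {0..} \<omega>"
    and "\<omega> 0 = 0"
  shows "\<exists>M \<subseteq> (C_omega_b \<omega> :: ('a \<Rightarrow> 'a) set).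
           sigma_lower_porous (C_omega_b \<omega>) d_sup M \<and>
           (\<forall>f \<in> C_omega_b \<omega> - M. \<forall>s>0. modulus f s < ereal (\<omega> s))"
proof -
  obtain G :: "'a \<Rightarrow> 'a \<Rightarrow> real \<Rightarrow> 'a" where G: "coherent_geodesics G"
    and hyp: "\<forall>x y z. \<forall>t\<in>{0..1}. dist (geo_comb G t x y) (geo_comb G t x z) \<le> t * dist y z"
    using assms(1) unfolding hyperbolic_space_def by blast
  obtain s0 where s0: "s0 \<ge> 0" "\<omega> s0 \<noteq> 0" using assms(6) by blast
  define A :: "nat \<Rightarrow> ('a \<Rightarrow> 'a) set" where "A n = saturating_maps \<omega> (1 / Suc n)" for n
  have "lower_porous (C_omega_b \<omega>) d_sup (A n)" for n
  proof -
    have r: "1 / real (Suc n) > 0" by simp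
    then have "\<omega> (1 / Suc n) > 0" by (rule subadditive_pos[OF assms(4,5,7) s0])
    moreover have "\<omega> (1 / Suc n) \<le> \<omega> s" if "1 / Suc n \<le> s" for s
    proof -
      have "s \<ge> 0" using r that by linarith
      then show ?thesis using r that mono_onD[OF assms(7)] by simp
    qed
    ultimately show ?thesis unfolding A_def by (rule lower_porous_saturating_maps[OF G hyp])
  qed
  moreover have "modulus f s < ereal (\<omega> s)" if "f \<in> C_omega_b \<omega> - (\<Union>n. A n)" "s > 0" for f s
  proof -
    obtain n :: nat where "1 / s < n" using reals_Archimedean2 by blast
    then have "1 / s < Suc n" by simp
    then have "1 / Suc n \<le> s" using \<open>s > 0\<close> by (simp add: field_simps)
    then show ?thesis using that by (auto simp: A_def saturating_maps_def)
  qed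
  moreover have "(\<Union>n. A n) \<subseteq> C_omega_b \<omega>" by (auto simp: A_def saturating_maps_def)
  ultimately show ?thesis unfolding sigma_lower_porous_def by blast
qed

end
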